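(* Let $r>2$, $r_1\ge2$, $r_2\ge0$ with $r=r_1+r_2$. Then there exists $c>0$ such that for all $\kappa_1,\kappa_2>0$ (and for either choice of sign $\pm$): (i) $\displaystyle\int_0^\infty M\big(\kappa_1(s^2\pm1)^2+\kappa_2\big)^{-1/4}L\big(\kappa_1(s^2\pm1)^2+\kappa_2\big)^{-r}\,ds\le c\,\kappa_1^{-1/4}L(\kappa_1)^{-r_1+1}L(\kappa_2)^{-r_2}$; (ii) $\displaystyle\int_0^\infty |s^2\pm1|^{-1/2}L\big(\kappa_1(s^2\pm1)^2\big)^{-r}\,ds\le c\,L(\kappa_1^{-1})L(\kappa_1)^{-r+1}$; (iii) $\displaystyle\int_0^\infty M(\kappa_1s^2+\kappa_2)^{-1/2}L(\kappa_1s^2+\kappa_2)^{-r}\,ds\le c\,\kappa_1^{-1/2}L(\kappa_2)^{-r+2}$; (iv) $\displaystyle\int_0^\infty(\kappa_1s^2+\kappa_2)^{-1/2}L(\kappa_1s^2+\kappa_2)^{-r}\,ds\le c\,\kappa_1^{-1/2}L(\kappa_2^{-1})L(\kappa_2)^{-r+2}$.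
   Context: $M:\mathbb{R}\to[9,\infty)$, $M(x)=\max(9,x)$, and $L=\log\circ M:\mathbb{R}\to[\log9,\infty)$. *)

theory Defs
  imports "HOL-Analysis.Analysis"
begin

definition M :: "real \<Rightarrow> real" where
  "M x = max 9 x"

definition L :: "real \<Rightarrow> real" where
  "L x = ln (M x)"

end

theory Submission
  imports Defs
begin

(* Every integral is split at the point b beyond which the argument of L exceeds 9. On the
   bounded part the integrand is bounded by its value at the left end; beyond b we have L = ln,
   and the tail integral of ds / (s ln(\<kappa> s^k)^q) is computed exactly by the fundamental
   theorem of calculus, giving L(\<kappa> b^k)^(1-q) / (k (q - 1)).  The length of the bounded
   part costs a factor \<kappa>^(-1/k) for the M-weighted integrals and a factor L(1/\<kappa>)
   for the 1/s-weighted ones.  For \<sigma> = -1 the quartic (s^2 - 1)^2 vanishes at s = 1, where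
   it is compared with (s - 1)^2: at distance at least M(\<kappa>)^(-1/4) from 1 one still has
   L(\<kappa> (s-1)^2) \<ge> L(\<kappa>)/2, while the remaining window only contributes
   M(\<kappa>)^(-1/8), which is absorbed by any negative power of L(\<kappa>).  In (i) the shift
   by \<kappa>2 is split off as L(x)^(-r) = L(x)^(-r1) L(x)^(-r2) \<le> L(x)^(-r1) L(\<kappa>2)^(-r2). *)

section \<open>Elementary properties of M and L\<close>

lemma M_ge_9: "9 \<le> M x"
  by (simp add: M_def)

lemma M_ge: "x \<le> M x"
  by (simp add: M_def)

lemma M_mono: "x \<le> y \<Longrightarrow> M x \<le> M y"
  by (simp add: M_def)

lemma M_powr_antimono: "x \<le> y \<Longrightarrow> e \<le> 0 \<Longrightarrow> M y powr e \<le> M x powr e"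
  using M_ge_9[of x] by (intro powr_mono2' M_mono) auto

lemma two_le_ln_9: "2 \<le> ln (9::real)"
proof -
  have "exp (2::real) = exp 1 ^ 2"
    by (simp add: exp_of_nat_mult[symmetric])
  also have "\<dots> \<le> 3 ^ 2"
    using exp_le by (intro power_mono) auto
  finally show ?thesis
    by (simp add: ln_ge_iff)
qed

lemma ln_9_le_L: "ln 9 \<le> L x"
  by (simp add: L_def M_def)

lemma one_le_L: "1 \<le> L x"
  using ln_9_le_L[of x] two_le_ln_9 by linarith

lemma L_pos: "0 < L x"
  using one_le_L[of x] by linarith

lemma L_mono: "x \<le> y \<Longrightarrow> L x \<le> L y"
  by (auto simp: L_def M_def)

lemma L_eq_ln: "9 \<le> x \<Longrightarrow> L x = ln x"
  by (simp add: L_def M_def)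

lemma ln_le_L: "0 < x \<Longrightarrow> ln x \<le> L x"
  by (simp add: L_def M_def)

lemma L_M [simp]: "L (M x) = L x"
  by (simp add: L_def M_def)

lemma L_powr_antimono: "x \<le> y \<Longrightarrow> e \<le> 0 \<Longrightarrow> L y powr e \<le> L x powr e"
  using L_pos[of x] by (intro powr_mono2' L_mono) auto

lemma L_powr_mono: "a \<le> b \<Longrightarrow> L x powr a \<le> L x powr b"
  by (rule powr_mono[OF _ one_le_L])

lemma M_L_powr_antimono:
  "x \<le> y \<Longrightarrow> a \<le> 0 \<Longrightarrow> b \<le> 0 \<Longrightarrow> M y powr a * L y powr b \<le> M x powr a * L x powr b"
  by (intro mult_mono M_powr_antimono L_powr_antimono) auto

lemma ln_M_div_le_L_inverse:
  assumes "0 < x"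
  shows "ln (M x / x) \<le> 2 * L (1 / x)"
proof (cases "9 \<le> x")
  case True
  then show ?thesis
    using L_pos[of "1/x"] by (simp add: M_def)
next
  case False
  then have "ln (M x / x) = ln 9 + ln (1 / x)"
    using assms by (simp add: M_def ln_div)
  also have "\<dots> \<le> 2 * L (1 / x)"
    using ln_9_le_L[of "1/x"] ln_le_L[of "1/x"] assms by simp
  finally show ?thesis .
qed

lemma ln_powr_le_powr:
  fixes y m e :: real
  assumes "1 \<le> y" "0 < m" "0 < e"
  shows "ln y powr m \<le> (m / e) powr m * y powr e"
proof -
  have "ln (y powr (e / m)) \<le> y powr (e / m)"
    using ln_le_minus_one[of "y powr (e / m)"] assms by simp
  then have "ln y \<le> m / e * y powr (e / m)"
    using assms by (simp add: ln_powr field_simps)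
  then have "ln y powr m \<le> (m / e * y powr (e / m)) powr m"
    using assms by (intro powr_mono2) auto
  also have "\<dots> = (m / e) powr m * y powr e"
    using assms by (simp add: powr_mult powr_powr powr_divide)
  finally show ?thesis .
qed

lemma M_powr_le_L_powr:
  fixes m e :: real
  assumes "0 < m" "0 < e"
  shows "M x powr (-e) \<le> (m / e) powr m * L x powr (-m)"
proof -
  have L: "L x powr m \<le> (m / e) powr m * M x powr e"
    unfolding L_def using ln_powr_le_powr[of "M x" m e] M_ge_9[of x] assms by simp
  have "M x powr (-e) = M x powr (-e) * L x powr m * L x powr (-m)"
    using L_pos[of x] by (simp add: powr_minus field_simps)
  also have "\<dots> \<le> M x powr (-e) * ((m / e) powr m * M x powr e) * L x powr (-m)"
    by (intro mult_right_mono mult_left_mono L) auto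
  also have "\<dots> = (m / e) powr m * L x powr (-m)"
    using M_ge_9[of x] by (simp add: powr_minus field_simps)
  finally show ?thesis .
qed

lemma L_mult_M_powr_ge:
  assumes "0 < x"
  shows "L x / 2 \<le> L (x * M x powr (-1/2))"
proof (cases "9 \<le> x")
  case True
  then have "x * M x powr (-1/2) = sqrt x"
    using assms by (simp add: M_def powr_minus_divide powr_half_sqrt real_div_sqrt)
  then show ?thesis
    using True assms ln_le_L[of "sqrt x"] by (simp add: L_eq_ln ln_sqrt)
next
  case False
  then show ?thesis
    using ln_9_le_L[of "x * M x powr (-1/2)"] two_le_ln_9 by (simp add: L_def[of x] M_def)
qed

lemma borel_measurable_M [measurable]: "M \<in> borel_measurable borel"
  unfolding M_def by measurable

lemma borel_measurable_L [measurable]: "L \<in> borel_measurable borel"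
  unfolding L_def by measurable

lemma ennreal_add_le:
  fixes X Y :: ennreal
  assumes "X \<le> ennreal a" "Y \<le> ennreal b" "0 \<le> a" "0 \<le> b"
  shows "X + Y \<le> ennreal (a + b)"
  using add_mono[OF assms(1,2)] assms(3,4) by (simp add: ennreal_plus)

lemma ennreal_le_weaken:
  assumes "X \<le> ennreal (C * B)" "C \<le> c" "B \<le> B'" "0 \<le> C" "0 \<le> B"
  shows "X \<le> ennreal (c * B')"
proof -
  have "C * B \<le> c * B'"
    using assms by (intro mult_mono) auto
  with assms(1) show ?thesis
    by (meson ennreal_leI order_trans)
qed

lemma set_nn_integral_mono_real:
  assumes "\<And>s. s \<in> A \<Longrightarrow> f s \<le> g s"
  shows "(\<integral>\<^sup>+s\<in>A. ennreal (f s) \<partial>lborel) \<le> (\<integral>\<^sup>+s\<in>A. ennreal (g s) \<partial>lborel)"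
  using assms by (intro nn_integral_mono) (auto split: split_indicator intro!: ennreal_leI)

lemma set_nn_integral_le_const:
  fixes f :: "real \<Rightarrow> real"
  assumes "\<And>s. s \<in> {a..b} \<Longrightarrow> f s \<le> C" "a \<le> b" "0 \<le> C"
  shows "(\<integral>\<^sup>+s\<in>{a..b}. ennreal (f s) \<partial>lborel) \<le> ennreal (C * (b - a))"
proof -
  have "(\<integral>\<^sup>+s\<in>{a..b}. ennreal (f s) \<partial>lborel) \<le> (\<integral>\<^sup>+s\<in>{a..b}. ennreal C \<partial>lborel)"
    using set_nn_integral_mono_real[of "{a..b}" f "\<lambda>_. C"] assms(1) by simp
  also have "\<dots> = ennreal (C * (b - a))"
    using assms(2,3) by (simp add: nn_integral_cmult_indicator ennreal_mult)
  finally show ?thesis .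
qed

lemma set_nn_integral_cmult_real:
  fixes f :: "real \<Rightarrow> real"
  assumes [measurable]: "f \<in> borel_measurable borel" "A \<in> sets borel" and "0 \<le> c"
  shows "(\<integral>\<^sup>+s\<in>A. ennreal (c * f s) \<partial>lborel) = ennreal c * (\<integral>\<^sup>+s\<in>A. ennreal (f s) \<partial>lborel)"
  using assms(3) by (subst nn_integral_cmult[symmetric])
    (auto simp: ennreal_mult' mult.assoc intro!: nn_integral_cong)

lemma set_nn_integral_cmult_le:
  fixes f :: "real \<Rightarrow> real"
  assumes [measurable]: "f \<in> borel_measurable borel" "A \<in> sets borel"
    and "(\<integral>\<^sup>+s\<in>A. ennreal (f s) \<partial>lborel) \<le> ennreal B" "0 \<le> c"
  shows "(\<integral>\<^sup>+s\<in>A. ennreal (c * f s) \<partial>lborel) \<le> ennreal (c * B)"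
  unfolding set_nn_integral_cmult_real[OF assms(1,2,4)]
  using mult_left_mono[OF assms(3), of "ennreal c"] assms(4) by (simp add: ennreal_mult')

lemma set_nn_integral_atLeast_split_le:
  fixes f :: "real \<Rightarrow> real"
  assumes [measurable]: "f \<in> borel_measurable borel"
    and "(\<integral>\<^sup>+s\<in>{a..b}. ennreal (f s) \<partial>lborel) \<le> ennreal A"
    and "(\<integral>\<^sup>+s\<in>{b..}. ennreal (f s) \<partial>lborel) \<le> ennreal B"
    and "0 \<le> A" "0 \<le> B"
  shows "(\<integral>\<^sup>+s\<in>{a..}. ennreal (f s) \<partial>lborel) \<le> ennreal (A + B)"
proof -
  have "(\<integral>\<^sup>+s\<in>{a..}. ennreal (f s) \<partial>lborel)
      \<le> (\<integral>\<^sup>+s. ennreal (f s) * indicator {a..b} s + ennreal (f s) * indicator {b..} s \<partial>lborel)"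
    by (intro nn_integral_mono) (auto split: split_indicator)
  also have "\<dots> = (\<integral>\<^sup>+s\<in>{a..b}. ennreal (f s) \<partial>lborel) + (\<integral>\<^sup>+s\<in>{b..}. ennreal (f s) \<partial>lborel)"
    by (rule nn_integral_add) measurable
  also have "\<dots> \<le> ennreal (A + B)"
    using assms(2-) by (rule ennreal_add_le)
  finally show ?thesis .
qed

lemma nn_integral_inverse_Icc:
  assumes "0 < a" "a \<le> b"
  shows "(\<integral>\<^sup>+s\<in>{a..b}. ennreal (1 / s) \<partial>lborel) = ennreal (ln b - ln a)"
  by (rule nn_integral_FTC_Icc[where F = ln]) (use assms in \<open>auto intro!: derivative_eq_intros\<close>)

lemma nn_integral_L_tail:
  fixes \<kappa> b q :: real and k :: nat
  assumes "0 < \<kappa>" "0 < b" "0 < k" "1 < q" "9 \<le> \<kappa> * b ^ k"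
  shows "(\<integral>\<^sup>+s\<in>{b..}. ennreal (1 / s * L (\<kappa> * s ^ k) powr (-q)) \<partial>lborel)
       = ennreal (L (\<kappa> * b ^ k) powr (1 - q) / (k * (q - 1)))"
proof -
  define F where "F s = - (ln (\<kappa> * s ^ k) powr (1 - q)) / (k * (q - 1))" for s
  have large: "9 \<le> \<kappa> * s ^ k" if "b \<le> s" for s
    using assms that order_trans[OF assms(5) mult_left_mono[OF power_mono[of b s k]]] by simp
  have deriv: "DERIV F s :> 1 / s * L (\<kappa> * s ^ k) powr (-q)" if "b \<le> s" for s
  proof -
    have "s ^ k = s * s ^ (k - 1)"
      using assms(3) by (cases k) auto
    then have "DERIV (\<lambda>s. ln (\<kappa> * s ^ k)) s :> k / s"
      using assms that by (auto intro!: derivative_eq_intros simp: field_simps)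
    from DERIV_fun_powr[OF this, of "1 - q"]
    have "DERIV (\<lambda>s. ln (\<kappa> * s ^ k) powr (1 - q)) s :> (1 - q) * ln (\<kappa> * s ^ k) powr (- q) * (k / s)"
      using large[OF that] by simp
    then have "DERIV F s :> - ((1 - q) * ln (\<kappa> * s ^ k) powr (- q) * (k / s)) / (k * (q - 1))"
      unfolding F_def by (intro DERIV_cdivide DERIV_minus)
    moreover have "- ((1 - q) * u * (k / s)) / (k * (q - 1)) = 1 / s * u" for u
      using assms that by (simp add: field_simps)
    ultimately show ?thesis
      unfolding L_eq_ln[OF large[OF that]] by simp
  qed
  have "filterlim (\<lambda>s. \<kappa> * s ^ k) at_top at_top"
    using assms by (intro filterlim_tendsto_pos_mult_at_top[OF tendsto_const] filterlim_pow_at_top filterlim_ident) auto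
  then have "((\<lambda>s. ln (\<kappa> * s ^ k) powr (1 - q)) \<longlongrightarrow> 0) at_top"
    using assms by (intro tendsto_neg_powr filterlim_compose[OF ln_at_top]) auto
  then have "(F \<longlongrightarrow> 0) at_top"
    unfolding F_def using tendsto_divide_zero[OF tendsto_minus_cancel_left[THEN iffD1]] by auto
  then have "(\<integral>\<^sup>+s\<in>{b..}. ennreal (1 / s * L (\<kappa> * s ^ k) powr (-q)) \<partial>lborel) = ennreal (0 - F b)"
    using deriv assms by (intro nn_integral_FTC_atLeast) auto
  then show ?thesis
    by (simp add: F_def L_eq_ln[OF assms(5)])
qed

lemma nn_integral_powr_half_Icc:
  assumes "0 \<le> d"
  shows "(\<integral>\<^sup>+x\<in>{0..d}. ennreal (\<bar>x\<bar> powr (-1/2)) \<partial>lborel) = ennreal (2 * sqrt d)"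
proof -
  have "((\<lambda>x. x powr (-1/2)) has_integral (d powr (-1/2 + 1) / (-1/2 + 1))) {0..d}"
    using assms by (intro has_integral_powr_from_0) auto
  moreover have "d powr (-1/2 + 1) / (-1/2 + 1) = 2 * sqrt d"
    using assms by (simp add: powr_half_sqrt)
  ultimately have "(\<integral>\<^sup>+x\<in>{0..d}. ennreal (x powr (-1/2)) \<partial>lborel) = ennreal (2 * sqrt d)"
    by (metis nn_integral_has_integral_lebesgue' powr_ge_zero)
  then show ?thesis
    by (subst nn_integral_cong[where v = "\<lambda>x. ennreal (x powr (-1/2)) * indicator {0..d} x"])
      (auto split: split_indicator)
qed

lemma nn_integral_abs_powr_half_le:
  fixes c d :: real
  assumes "0 \<le> d"
  shows "(\<integral>\<^sup>+x\<in>{c-d..c+d}. ennreal (\<bar>x - c\<bar> powr (-1/2)) \<partial>lborel) \<le> ennreal (4 * sqrt d)"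
proof -
  let ?g = "\<lambda>x. ennreal (\<bar>x - c\<bar> powr (-1/2))"
  have reflect: "(\<integral>\<^sup>+x\<in>I. ?g x \<partial>lborel) = (\<integral>\<^sup>+x\<in>{0..d}. ennreal (\<bar>x\<bar> powr (-1/2)) \<partial>lborel)"
    if "I = {c..c+d} \<and> e = 1 \<or> I = {c-d..c} \<and> e = -1" for I and e :: real
  proof -
    have "(\<integral>\<^sup>+x\<in>I. ?g x \<partial>lborel) = (\<integral>\<^sup>+x. ?g (c + e * x) * indicator I (c + e * x) \<partial>lborel)"
      using that nn_integral_real_affine[where c = e and t = c and f = "\<lambda>x. ?g x * indicator I x"]
      by auto
    also have "\<dots> = (\<integral>\<^sup>+x\<in>{0..d}. ennreal (\<bar>x\<bar> powr (-1/2)) \<partial>lborel)"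
      using that by (intro nn_integral_cong) (auto split: split_indicator)
    finally show ?thesis .
  qed
  have "(\<integral>\<^sup>+x\<in>{c-d..c+d}. ?g x \<partial>lborel)
      \<le> (\<integral>\<^sup>+x. ?g x * indicator {c..c+d} x + ?g x * indicator {c-d..c} x \<partial>lborel)"
    by (intro nn_integral_mono) (auto split: split_indicator)
  also have "\<dots> = (\<integral>\<^sup>+x\<in>{c..c+d}. ?g x \<partial>lborel) + (\<integral>\<^sup>+x\<in>{c-d..c}. ?g x \<partial>lborel)"
    by (rule nn_integral_add) measurable
  also have "\<dots> = ennreal (2 * sqrt d) + ennreal (2 * sqrt d)"
    using reflect[of "{c..c+d}" 1] reflect[of "{c-d..c}" "-1"] nn_integral_powr_half_Icc[OF assms]
    by simp
  also have "\<dots> = ennreal (4 * sqrt d)"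
    using assms by (subst ennreal_plus[symmetric]) auto
  finally show ?thesis .
qed

section \<open>Tail integrals\<close>

lemma powr_mult_power_inverse:
  fixes \<kappa> s :: real and k :: nat
  assumes "0 < \<kappa>" "0 < s" "0 < k"
  shows "(\<kappa> * s ^ k) powr (-1 / k) = \<kappa> powr (-1 / k) / s"
proof -
  have "(s ^ k) powr (-1 / k) = s powr (-1)"
    using assms by (simp add: powr_realpow[symmetric] powr_powr)
  then show ?thesis
    using assms by (simp add: powr_mult powr_minus_divide)
qed

text \<open>The splitting point b: beyond it \<kappa> s^k \<ge> M(\<kappa> a^k) \<ge> 9, so L = ln there.\<close>

lemma M_rescaling_point:
  fixes \<kappa> a :: real and k :: nat
  assumes "0 < \<kappa>" "0 < a" "0 < k"
  defines "b \<equiv> a * (M (\<kappa> * a ^ k) / (\<kappa> * a ^ k)) powr (1 / k)"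
  shows "a \<le> b" "\<kappa> * b ^ k = M (\<kappa> * a ^ k)"
    and "ln b - ln a = ln (M (\<kappa> * a ^ k) / (\<kappa> * a ^ k)) / k"
proof -
  define \<rho> where "\<rho> = M (\<kappa> * a ^ k) / (\<kappa> * a ^ k)"
  have \<rho>: "1 \<le> \<rho>"
    unfolding \<rho>_def using assms M_ge[of "\<kappa> * a ^ k"] by simp
  show "a \<le> b"
    unfolding b_def \<rho>_def[symmetric] using assms \<rho> by (simp add: ge_one_powr_ge_zero)
  have "(\<rho> powr (1 / k)) ^ k = \<rho>"
    using \<rho> assms by (simp add: powr_realpow[symmetric] powr_powr)
  then show "\<kappa> * b ^ k = M (\<kappa> * a ^ k)"
    unfolding b_def \<rho>_def[symmetric] using assms by (simp add: power_mult_distrib \<rho>_def)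
  show "ln b - ln a = ln \<rho> / k"
    unfolding b_def \<rho>_def[symmetric] using assms \<rho> by (simp add: ln_mult ln_powr)
qed

lemma nn_integral_M_L_tail:
  fixes \<kappa> b q :: real and k :: nat
  assumes "0 < \<kappa>" "0 < b" "0 < k" "1 < q" "9 \<le> \<kappa> * b ^ k"
  shows "(\<integral>\<^sup>+s\<in>{b..}. ennreal (M (\<kappa> * s ^ k) powr (-1 / k) * L (\<kappa> * s ^ k) powr (-q)) \<partial>lborel)
       = ennreal (\<kappa> powr (-1 / k) * (L (\<kappa> * b ^ k) powr (1 - q) / (k * (q - 1))))"
proof -
  have "M (\<kappa> * s ^ k) powr (-1 / k) = \<kappa> powr (-1 / k) * (1 / s)" if "b \<le> s" for s
  proof -
    have "9 \<le> \<kappa> * s ^ k"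
      using order_trans[OF assms(5) mult_left_mono[OF power_mono[OF that]]] assms by simp
    then show ?thesis
      using assms that powr_mult_power_inverse[of \<kappa> s k] by (simp add: M_def)
  qed
  then have "(\<integral>\<^sup>+s\<in>{b..}. ennreal (M (\<kappa> * s ^ k) powr (-1 / k) * L (\<kappa> * s ^ k) powr (-q)) \<partial>lborel)
      = (\<integral>\<^sup>+s\<in>{b..}. ennreal (\<kappa> powr (-1 / k) * (1 / s * L (\<kappa> * s ^ k) powr (-q))) \<partial>lborel)"
    by (intro nn_integral_cong) (simp split: split_indicator)
  also have "\<dots> = ennreal (\<kappa> powr (-1 / k)) * (\<integral>\<^sup>+s\<in>{b..}. ennreal (1 / s * L (\<kappa> * s ^ k) powr (-q)) \<partial>lborel)"
  proof (rule set_nn_integral_cmult_real)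
    show "(\<lambda>s. 1 / s * L (\<kappa> * s ^ k) powr (-q)) \<in> borel_measurable borel"
      by measurable
  qed auto
  also have "\<dots> = ennreal (\<kappa> powr (-1 / k) * (L (\<kappa> * b ^ k) powr (1 - q) / (k * (q - 1))))"
    unfolding nn_integral_L_tail[OF assms] by (simp add: ennreal_mult'[symmetric])
  finally show ?thesis .
qed

lemma nn_integral_M_L_tail_le:
  fixes \<kappa> a q :: real and k :: nat
  assumes "0 < \<kappa>" "0 < a" "0 < k" "1 < q"
  shows "(\<integral>\<^sup>+s\<in>{a..}. ennreal (M (\<kappa> * s ^ k) powr (-1 / k) * L (\<kappa> * s ^ k) powr (-q)) \<partial>lborel)
       \<le> ennreal ((1 + 1 / (k * (q - 1))) * \<kappa> powr (-1 / k) * L (\<kappa> * a ^ k) powr (1 - q))"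
proof -
  define y where "y = \<kappa> * a ^ k"
  define b where "b = a * (M y / y) powr (1 / k)"
  have ab: "a \<le> b" and b: "\<kappa> * b ^ k = M y"
    using M_rescaling_point[OF assms(1-3)] by (simp_all add: b_def y_def)
  have y_le: "y \<le> \<kappa> * s ^ k" if "a \<le> s" for s
    unfolding y_def using assms that by (intro mult_left_mono power_mono) auto
  have "b = (M y / \<kappa>) powr (1 / k)"
    using assms ab by (simp flip: b add: powr_realpow[symmetric] powr_powr)
  then have Mb: "M y powr (-1 / k) * b = \<kappa> powr (-1 / k)"
    using assms M_ge_9[of y] by (simp add: powr_divide powr_minus field_simps)
  have "(\<integral>\<^sup>+s\<in>{a..b}. ennreal (M (\<kappa> * s ^ k) powr (-1 / k) * L (\<kappa> * s ^ k) powr (-q)) \<partial>lborel)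
      \<le> ennreal (M y powr (-1 / k) * L y powr (-q) * (b - a))"
    using y_le M_powr_antimono L_powr_antimono assms ab
    by (intro set_nn_integral_le_const mult_mono) auto
  also have "\<dots> \<le> ennreal (M y powr (-1 / k) * L y powr (1 - q) * b)"
    using assms ab L_powr_mono[of "-q" "1 - q" y] by (intro ennreal_leI mult_mono) auto
  also have "\<dots> = ennreal (\<kappa> powr (-1 / k) * L y powr (1 - q))"
    unfolding Mb[symmetric] by (simp add: mult_ac)
  finally have "(\<integral>\<^sup>+s\<in>{a..}. ennreal (M (\<kappa> * s ^ k) powr (-1 / k) * L (\<kappa> * s ^ k) powr (-q)) \<partial>lborel)
      \<le> ennreal (\<kappa> powr (-1 / k) * L y powr (1 - q) + \<kappa> powr (-1 / k) * (L y powr (1 - q) / (k * (q - 1))))"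
    using nn_integral_M_L_tail[of \<kappa> b k q] assms ab b M_ge_9[of y]
    by (intro set_nn_integral_atLeast_split_le) auto
  then show ?thesis
    by (simp add: y_def algebra_simps)
qed

lemma nn_integral_inverse_L_tail_le:
  fixes \<kappa> a q :: real and k :: nat
  assumes "0 < \<kappa>" "0 < a" "0 < k" "1 < q"
  shows "(\<integral>\<^sup>+s\<in>{a..}. ennreal (1 / s * L (\<kappa> * s ^ k) powr (-q)) \<partial>lborel)
       \<le> ennreal ((2 + 1 / (q - 1)) / k * L (1 / (\<kappa> * a ^ k)) * L (\<kappa> * a ^ k) powr (1 - q))"
proof -
  define y where "y = \<kappa> * a ^ k"
  define b where "b = a * (M y / y) powr (1 / k)"
  have ab: "a \<le> b" and b: "\<kappa> * b ^ k = M y" and ln_b: "ln b - ln a = ln (M y / y) / k"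
    using M_rescaling_point[OF assms(1-3)] by (simp_all add: b_def y_def)
  have y: "0 < y"
    using assms by (simp add: y_def)
  have "(\<integral>\<^sup>+s\<in>{a..b}. ennreal (1 / s * L (\<kappa> * s ^ k) powr (-q)) \<partial>lborel)
      \<le> (\<integral>\<^sup>+s\<in>{a..b}. ennreal (L y powr (-q) * (1 / s)) \<partial>lborel)"
  proof (intro set_nn_integral_mono_real)
    fix s assume "s \<in> {a..b}"
    then have "y \<le> \<kappa> * s ^ k" and "0 < s"
      unfolding y_def using assms by (auto intro!: mult_left_mono power_mono)
    then show "1 / s * L (\<kappa> * s ^ k) powr (-q) \<le> L y powr (-q) * (1 / s)"
      using assms L_powr_antimono[of y "\<kappa> * s ^ k" "-q"] by (simp add: divide_right_mono)
  qed
  also have "\<dots> \<le> ennreal (L y powr (-q) * (ln b - ln a))"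
    using nn_integral_inverse_Icc[of a b] assms ab by (intro set_nn_integral_cmult_le) auto
  also have "\<dots> \<le> ennreal (2 / k * L (1 / y) * L y powr (1 - q))"
  proof (intro ennreal_leI)
    have "ln b - ln a \<le> 2 / k * L (1 / y)"
      unfolding ln_b using ln_M_div_le_L_inverse[OF y] assms by (simp add: divide_right_mono)
    moreover have "0 \<le> ln b - ln a"
      using assms ab by simp
    ultimately have "L y powr (-q) * (ln b - ln a) \<le> L y powr (1 - q) * (2 / k * L (1 / y))"
      using L_powr_mono[of "-q" "1 - q" y] by (intro mult_mono) auto
    then show "L y powr (-q) * (ln b - ln a) \<le> 2 / k * L (1 / y) * L y powr (1 - q)"
      by (simp add: mult_ac)
  qed
  finally have head: "(\<integral>\<^sup>+s\<in>{a..b}. ennreal (1 / s * L (\<kappa> * s ^ k) powr (-q)) \<partial>lborel)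
      \<le> ennreal (2 / k * L (1 / y) * L y powr (1 - q))" .
  have "(\<integral>\<^sup>+s\<in>{b..}. ennreal (1 / s * L (\<kappa> * s ^ k) powr (-q)) \<partial>lborel)
      = ennreal (L y powr (1 - q) / (k * (q - 1)))"
    using nn_integral_L_tail[of \<kappa> b k q] assms ab b M_ge_9[of y] by simp
  also have "\<dots> \<le> ennreal (1 / (k * (q - 1)) * L (1 / y) * L y powr (1 - q))"
    using mult_right_mono[OF one_le_L[of "1 / y"], of "L y powr (1 - q)"] assms
    by (intro ennreal_leI) (simp add: divide_right_mono)
  finally have tail: "(\<integral>\<^sup>+s\<in>{b..}. ennreal (1 / s * L (\<kappa> * s ^ k) powr (-q)) \<partial>lborel)
      \<le> ennreal (1 / (k * (q - 1)) * L (1 / y) * L y powr (1 - q))" .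
  have "(\<integral>\<^sup>+s\<in>{a..}. ennreal (1 / s * L (\<kappa> * s ^ k) powr (-q)) \<partial>lborel)
      \<le> ennreal (2 / k * L (1 / y) * L y powr (1 - q) + 1 / (k * (q - 1)) * L (1 / y) * L y powr (1 - q))"
    using head tail assms L_pos[of "1 / y"] by (intro set_nn_integral_atLeast_split_le) auto
  also have "2 / k * L (1 / y) * L y powr (1 - q) + 1 / (k * (q - 1)) * L (1 / y) * L y powr (1 - q)
      = (2 + 1 / (q - 1)) / k * L (1 / y) * L y powr (1 - q)"
    using assms by (simp add: field_simps)
  finally show ?thesis
    by (simp only: y_def)
qed

lemma L_mult_square_powr_le:
  fixes \<kappa> q u :: real
  assumes "0 < \<kappa>" "0 \<le> q" "M \<kappa> powr (-1/4) \<le> \<bar>u\<bar>"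
  shows "L (\<kappa> * u\<^sup>2) powr (-q) \<le> 2 powr q * L \<kappa> powr (-q)"
proof -
  have "(M \<kappa> powr (-1/4))\<^sup>2 \<le> u\<^sup>2"
    using power_mono[OF assms(3), of 2] by simp
  then have "\<kappa> * M \<kappa> powr (-1/2) \<le> \<kappa> * u\<^sup>2"
    using assms(1) M_ge_9[of \<kappa>] by (simp add: power2_eq_square flip: powr_add)
  then have "L \<kappa> / 2 \<le> L (\<kappa> * u\<^sup>2)"
    using L_mult_M_powr_ge[OF assms(1)] L_mono by (blast intro: order_trans)
  then have "L (\<kappa> * u\<^sup>2) powr (-q) \<le> (L \<kappa> / 2) powr (-q)"
    using L_pos[of \<kappa>] assms(2) by (intro powr_mono2') auto
  also have "\<dots> = 2 powr q * L \<kappa> powr (-q)"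
    using L_pos[of \<kappa>] by (simp add: powr_divide powr_minus_divide)
  finally show ?thesis .
qed

lemma sqrt_M_powr_le_L_powr:
  fixes q :: real
  assumes "1 < q"
  shows "sqrt (M x powr (-1/4)) \<le> (8 * (q - 1)) powr (q - 1) * L x powr (1 - q)"
proof -
  have "sqrt (M x powr (-1/4)) = M x powr (-1/8)"
    using M_ge_9[of x] by (simp add: powr_half_sqrt[symmetric] powr_powr)
  also have "\<dots> \<le> (8 * (q - 1)) powr (q - 1) * L x powr (1 - q)"
    using M_powr_le_L_powr[of "q - 1" "1/8" x] assms by (simp add: mult.commute)
  finally show ?thesis .
qed

lemma nn_integral_abs_powr_L_le:
  fixes \<kappa> c q :: real
  assumes "0 < \<kappa>" "1 < q"
  shows "(\<integral>\<^sup>+s\<in>{c-1..c+1}. ennreal (\<bar>s - c\<bar> powr (-1/2) * L (\<kappa> * (s - c)\<^sup>2) powr (-q)) \<partial>lborel)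
       \<le> ennreal ((4 * 2 powr q + 4 * (8 * (q - 1)) powr (q - 1)) * L \<kappa> powr (1 - q))"
proof -
  define t where "t = M \<kappa> powr (-1/4)"
  define C where "C = 2 powr q * L \<kappa> powr (-q)"
  have "ennreal (\<bar>s - c\<bar> powr (-1/2) * L (\<kappa> * (s - c)\<^sup>2) powr (-q)) * indicator {c-1..c+1} s
      \<le> ennreal (C * \<bar>s - c\<bar> powr (-1/2)) * indicator {c-1..c+1} s
        + ennreal (\<bar>s - c\<bar> powr (-1/2)) * indicator {c-t..c+t} s" for s
  proof (cases "t \<le> \<bar>s - c\<bar>")
    case True
    then have "\<bar>s - c\<bar> powr (-1/2) * L (\<kappa> * (s - c)\<^sup>2) powr (-q) \<le> \<bar>s - c\<bar> powr (-1/2) * C"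
      unfolding t_def C_def using assms by (intro mult_left_mono L_mult_square_powr_le) auto
    then show ?thesis
      by (intro add_increasing2) (auto simp: mult.commute intro: ennreal_leI split: split_indicator)
  next
    case False
    have "\<bar>s - c\<bar> powr (-1/2) * L (\<kappa> * (s - c)\<^sup>2) powr (-q) \<le> \<bar>s - c\<bar> powr (-1/2) * 1"
      using L_powr_mono[of "-q" 0 "\<kappa> * (s - c)\<^sup>2"] L_pos[of "\<kappa> * (s - c)\<^sup>2"] assms(2)
      by (intro mult_left_mono) auto
    then show ?thesis
      using False by (intro add_increasing) (auto intro: ennreal_leI split: split_indicator)
  qed
  then have "(\<integral>\<^sup>+s\<in>{c-1..c+1}. ennreal (\<bar>s - c\<bar> powr (-1/2) * L (\<kappa> * (s - c)\<^sup>2) powr (-q)) \<partial>lborel)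
      \<le> (\<integral>\<^sup>+s\<in>{c-1..c+1}. ennreal (C * \<bar>s - c\<bar> powr (-1/2)) \<partial>lborel)
        + (\<integral>\<^sup>+s\<in>{c-t..c+t}. ennreal (\<bar>s - c\<bar> powr (-1/2)) \<partial>lborel)"
    by (subst nn_integral_add[symmetric]) (auto intro: nn_integral_mono)
  also have "\<dots> \<le> ennreal (C * (4 * sqrt 1) + 4 * sqrt t)"
    using nn_integral_abs_powr_half_le[of 1 c] nn_integral_abs_powr_half_le[of t c]
    by (intro ennreal_add_le set_nn_integral_cmult_le) (auto simp: C_def t_def)
  also have "\<dots> \<le> ennreal ((4 * 2 powr q + 4 * (8 * (q - 1)) powr (q - 1)) * L \<kappa> powr (1 - q))"
  proof (intro ennreal_leI)
    have "C \<le> 2 powr q * L \<kappa> powr (1 - q)"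
      unfolding C_def by (intro mult_left_mono L_powr_mono) auto
    then show "C * (4 * sqrt 1) + 4 * sqrt t \<le> (4 * 2 powr q + 4 * (8 * (q - 1)) powr (q - 1)) * L \<kappa> powr (1 - q)"
      using sqrt_M_powr_le_L_powr[OF assms(2), of \<kappa>] by (simp add: t_def algebra_simps)
  qed
  finally show ?thesis .
qed

section \<open>The quartic integrals\<close>

lemma power2_powr_neg_half:
  fixes x :: real
  assumes "0 < x"
  shows "(x\<^sup>2) powr (-1/2) = 1 / x"
  using assms powr_powr[of x 2 "-1/2"] by (simp add: powr_minus_divide)

lemma quartic_le_square_minus_one_square:
  fixes s :: real
  assumes "2 \<le> s"
  shows "s ^ 4 / 4 \<le> (s\<^sup>2 - 1)\<^sup>2"
proof -
  have "s\<^sup>2 / 2 \<le> s\<^sup>2 - 1"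
    using assms mult_mono[OF assms assms] by (simp add: power2_eq_square)
  then have "(s\<^sup>2 / 2)\<^sup>2 \<le> (s\<^sup>2 - 1)\<^sup>2"
    by (intro power_mono) auto
  then show ?thesis
    by (simp add: power_divide flip: power_mult)
qed

lemma nn_integral_M_L_quartic_plus_le:
  fixes \<kappa> q :: real
  assumes "0 < \<kappa>" "1 < q"
  shows "(\<integral>\<^sup>+s\<in>{0..}. ennreal (M (\<kappa> * (s\<^sup>2 + 1)\<^sup>2) powr (-1/4) * L (\<kappa> * (s\<^sup>2 + 1)\<^sup>2) powr (-q)) \<partial>lborel)
       \<le> ennreal ((2 + 1 / (4 * (q - 1))) * \<kappa> powr (-1/4) * L \<kappa> powr (1 - q))"
proof -
  let ?f = "\<lambda>s. M (\<kappa> * (s\<^sup>2 + 1)\<^sup>2) powr (-1/4) * L (\<kappa> * (s\<^sup>2 + 1)\<^sup>2) powr (-q)"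
  have "(\<integral>\<^sup>+s\<in>{0..1}. ennreal (?f s) \<partial>lborel) \<le> ennreal (\<kappa> powr (-1/4) * L \<kappa> powr (1 - q) * (1 - 0))"
  proof (intro set_nn_integral_le_const)
    fix s :: real
    have "\<kappa> \<le> \<kappa> * (s\<^sup>2 + 1)\<^sup>2"
      using assms by (simp add: one_le_power)
    then have "?f s \<le> M \<kappa> powr (-1/4) * L \<kappa> powr (-q)"
      using assms by (intro M_L_powr_antimono) auto
    also have "\<dots> \<le> \<kappa> powr (-1/4) * L \<kappa> powr (1 - q)"
      using assms M_ge[of \<kappa>] by (intro mult_mono powr_mono2' L_powr_mono) auto
    finally show "?f s \<le> \<kappa> powr (-1/4) * L \<kappa> powr (1 - q)" .
  qed auto
  moreover have "(\<integral>\<^sup>+s\<in>{1..}. ennreal (?f s) \<partial>lborel)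
      \<le> (\<integral>\<^sup>+s\<in>{1..}. ennreal (M (\<kappa> * s ^ 4) powr (-1/4) * L (\<kappa> * s ^ 4) powr (-q)) \<partial>lborel)"
  proof (intro set_nn_integral_mono_real)
    fix s :: real
    have "(s\<^sup>2)\<^sup>2 \<le> (s\<^sup>2 + 1)\<^sup>2"
      by (intro power_mono) auto
    then have "\<kappa> * s ^ 4 \<le> \<kappa> * (s\<^sup>2 + 1)\<^sup>2"
      using assms by (simp flip: power_mult)
    then show "?f s \<le> M (\<kappa> * s ^ 4) powr (-1/4) * L (\<kappa> * s ^ 4) powr (-q)"
      using assms by (intro M_L_powr_antimono) auto
  qed
  moreover have "\<dots> \<le> ennreal ((1 + 1 / (4 * (q - 1))) * \<kappa> powr (-1/4) * L \<kappa> powr (1 - q))"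
    using nn_integral_M_L_tail_le[of \<kappa> 1 4 q] assms by simp
  ultimately have "(\<integral>\<^sup>+s\<in>{0..}. ennreal (?f s) \<partial>lborel)
      \<le> ennreal (\<kappa> powr (-1/4) * L \<kappa> powr (1 - q) * (1 - 0) + (1 + 1 / (4 * (q - 1))) * \<kappa> powr (-1/4) * L \<kappa> powr (1 - q))"
    using assms by (intro set_nn_integral_atLeast_split_le) auto
  also have "\<dots> = ennreal ((2 + 1 / (4 * (q - 1))) * \<kappa> powr (-1/4) * L \<kappa> powr (1 - q))"
    by (simp add: algebra_simps)
  finally show ?thesis .
qed

lemma abs_diff_one_le_abs_square_diff_one:
  fixes s :: real
  assumes "0 \<le> s"
  shows "\<bar>s - 1\<bar> \<le> \<bar>s\<^sup>2 - 1\<bar>"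
proof -
  have "s\<^sup>2 - 1 = (s - 1) * (s + 1)"
    by (simp add: power2_eq_square algebra_simps)
  then show ?thesis
    using assms mult_left_mono[of 1 "s + 1" "\<bar>s - 1\<bar>"] by (simp add: abs_mult)
qed

lemma nn_integral_M_L_quartic_minus_near_le:
  fixes \<kappa> q :: real
  assumes "0 < \<kappa>" "1 < q"
  shows "(\<integral>\<^sup>+s\<in>{0..2}. ennreal (M (\<kappa> * (s\<^sup>2 - 1)\<^sup>2) powr (-1/4) * L (\<kappa> * (s\<^sup>2 - 1)\<^sup>2) powr (-q)) \<partial>lborel)
       \<le> ennreal (\<kappa> powr (-1/4) * ((4 * 2 powr q + 4 * (8 * (q - 1)) powr (q - 1)) * L \<kappa> powr (1 - q)))"
proof -
  have near: "M (\<kappa> * (s\<^sup>2 - 1)\<^sup>2) powr (-1/4) * L (\<kappa> * (s\<^sup>2 - 1)\<^sup>2) powr (-q)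
      \<le> \<kappa> powr (-1/4) * (\<bar>s - 1\<bar> powr (-1/2) * L (\<kappa> * (s - 1)\<^sup>2) powr (-q))"
    if "s \<in> {0..2}" "s \<noteq> 1" for s
  proof -
    have le: "\<kappa> * (s - 1)\<^sup>2 \<le> \<kappa> * (s\<^sup>2 - 1)\<^sup>2"
      using power_mono[OF abs_diff_one_le_abs_square_diff_one, of s 2] assms that by simp
    have "M (\<kappa> * (s\<^sup>2 - 1)\<^sup>2) powr (-1/4) \<le> (\<kappa> * (s - 1)\<^sup>2) powr (-1/4)"
      using order_trans[OF le M_ge] assms that by (intro powr_mono2') auto
    also have "\<dots> = \<kappa> powr (-1/4) * \<bar>s - 1\<bar> powr (-1/2)"
      using assms that powr_powr[of "\<bar>s - 1\<bar>" 2 "-1/4"] by (simp add: powr_mult)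
    finally have "M (\<kappa> * (s\<^sup>2 - 1)\<^sup>2) powr (-1/4) \<le> \<kappa> powr (-1/4) * \<bar>s - 1\<bar> powr (-1/2)" .
    from mult_mono[OF this L_powr_antimono[OF le, of "-q"]] assms show ?thesis
      by (simp add: mult.assoc)
  qed
  \<comment> \<open>Only almost everywhere: at s = 1 the right-hand side is 0 since 0 powr a = 0.\<close>
  have "(\<integral>\<^sup>+s\<in>{0..2}. ennreal (M (\<kappa> * (s\<^sup>2 - 1)\<^sup>2) powr (-1/4) * L (\<kappa> * (s\<^sup>2 - 1)\<^sup>2) powr (-q)) \<partial>lborel)
      \<le> (\<integral>\<^sup>+s\<in>{0..2}. ennreal (\<kappa> powr (-1/4) * (\<bar>s - 1\<bar> powr (-1/2) * L (\<kappa> * (s - 1)\<^sup>2) powr (-q))) \<partial>lborel)"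
    by (intro nn_integral_mono_AE AE_mp[OF AE_lborel_singleton[of 1] AE_I2])
      (auto simp: near[simplified] intro!: ennreal_leI split: split_indicator)
  also have "\<dots> \<le> ennreal (\<kappa> powr (-1/4) * ((4 * 2 powr q + 4 * (8 * (q - 1)) powr (q - 1)) * L \<kappa> powr (1 - q)))"
    using nn_integral_abs_powr_L_le[of \<kappa> q 1] assms by (intro set_nn_integral_cmult_le) auto
  finally show ?thesis .
qed

lemma nn_integral_M_L_quartic_minus_tail_le:
  fixes \<kappa> q :: real
  assumes "0 < \<kappa>" "1 < q"
  shows "(\<integral>\<^sup>+s\<in>{2..}. ennreal (M (\<kappa> * (s\<^sup>2 - 1)\<^sup>2) powr (-1/4) * L (\<kappa> * (s\<^sup>2 - 1)\<^sup>2) powr (-q)) \<partial>lborel)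
       \<le> ennreal ((2 + 1 / (2 * (q - 1))) * \<kappa> powr (-1/4) * L \<kappa> powr (1 - q))"
proof -
  have "(\<integral>\<^sup>+s\<in>{2..}. ennreal (M (\<kappa> * (s\<^sup>2 - 1)\<^sup>2) powr (-1/4) * L (\<kappa> * (s\<^sup>2 - 1)\<^sup>2) powr (-q)) \<partial>lborel)
      \<le> (\<integral>\<^sup>+s\<in>{2..}. ennreal (M (\<kappa> / 4 * s ^ 4) powr (-1/4) * L (\<kappa> / 4 * s ^ 4) powr (-q)) \<partial>lborel)"
    using quartic_le_square_minus_one_square assms
    by (intro set_nn_integral_mono_real M_L_powr_antimono) auto
  also have "\<dots> \<le> ennreal ((1 + 1 / (4 * (q - 1))) * (\<kappa> / 4) powr (-1/4) * L (4 * \<kappa>) powr (1 - q))"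
    using nn_integral_M_L_tail_le[of "\<kappa> / 4" 2 4 q] assms by simp
  also have "\<dots> \<le> ennreal ((1 + 1 / (4 * (q - 1))) * (2 * \<kappa> powr (-1/4)) * L \<kappa> powr (1 - q))"
  proof (intro ennreal_leI mult_mono mult_left_mono)
    have "(\<kappa> / 4) powr (-1/4) = 4 powr (1/4) * \<kappa> powr (-1/4)"
      using assms by (simp add: powr_divide powr_minus_divide)
    also have "\<dots> \<le> 2 * \<kappa> powr (-1/4)"
      using powr_mono[of "1/4" "1/2" 4] by (intro mult_right_mono) (auto simp: powr_half_sqrt)
    finally show "(\<kappa> / 4) powr (-1/4) \<le> 2 * \<kappa> powr (-1/4)" .
  qed (use assms in \<open>auto intro: L_powr_antimono\<close>)
  also have "\<dots> = ennreal ((2 + 1 / (2 * (q - 1))) * \<kappa> powr (-1/4) * L \<kappa> powr (1 - q))"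
    using assms by (intro arg_cong[where f = ennreal]) (simp add: field_simps)
  finally show ?thesis .
qed

lemma nn_integral_M_L_quartic_minus_le:
  fixes \<kappa> q :: real
  assumes "0 < \<kappa>" "1 < q"
  shows "(\<integral>\<^sup>+s\<in>{0..}. ennreal (M (\<kappa> * (s\<^sup>2 - 1)\<^sup>2) powr (-1/4) * L (\<kappa> * (s\<^sup>2 - 1)\<^sup>2) powr (-q)) \<partial>lborel)
       \<le> ennreal ((4 * 2 powr q + 4 * (8 * (q - 1)) powr (q - 1) + 2 + 1 / (2 * (q - 1)))
                   * \<kappa> powr (-1/4) * L \<kappa> powr (1 - q))"
proof -
  have "(\<integral>\<^sup>+s\<in>{0..}. ennreal (M (\<kappa> * (s\<^sup>2 - 1)\<^sup>2) powr (-1/4) * L (\<kappa> * (s\<^sup>2 - 1)\<^sup>2) powr (-q)) \<partial>lborel)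
      \<le> ennreal (\<kappa> powr (-1/4) * ((4 * 2 powr q + 4 * (8 * (q - 1)) powr (q - 1)) * L \<kappa> powr (1 - q))
                 + (2 + 1 / (2 * (q - 1))) * \<kappa> powr (-1/4) * L \<kappa> powr (1 - q))"
    using nn_integral_M_L_quartic_minus_near_le[OF assms] nn_integral_M_L_quartic_minus_tail_le[OF assms] assms
    by (intro set_nn_integral_atLeast_split_le) auto
  also have "\<dots> = ennreal ((4 * 2 powr q + 4 * (8 * (q - 1)) powr (q - 1) + 2 + 1 / (2 * (q - 1)))
                   * \<kappa> powr (-1/4) * L \<kappa> powr (1 - q))"
    by (simp add: algebra_simps)
  finally show ?thesis .
qed

lemma nn_integral_abs_L_quartic_plus_le:
  fixes \<kappa> q :: real
  assumes "0 < \<kappa>" "1 < q"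
  shows "(\<integral>\<^sup>+s\<in>{0..}. ennreal (\<bar>s\<^sup>2 + 1\<bar> powr (-1/2) * L (\<kappa> * (s\<^sup>2 + 1)\<^sup>2) powr (-q)) \<partial>lborel)
       \<le> ennreal ((3 / 2 + 1 / (4 * (q - 1))) * L (1 / \<kappa>) * L \<kappa> powr (1 - q))"
proof -
  let ?f = "\<lambda>s. \<bar>s\<^sup>2 + 1\<bar> powr (-1/2) * L (\<kappa> * (s\<^sup>2 + 1)\<^sup>2) powr (-q)"
  have "(\<integral>\<^sup>+s\<in>{0..1}. ennreal (?f s) \<partial>lborel) \<le> ennreal (L (1 / \<kappa>) * L \<kappa> powr (1 - q) * (1 - 0))"
  proof (intro set_nn_integral_le_const)
    fix s :: real
    have "\<kappa> \<le> \<kappa> * (s\<^sup>2 + 1)\<^sup>2"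
      using assms by (simp add: one_le_power)
    then have "L (\<kappa> * (s\<^sup>2 + 1)\<^sup>2) powr (-q) \<le> L \<kappa> powr (1 - q)"
      using assms by (intro order_trans[OF L_powr_antimono L_powr_mono]) auto
    moreover have "\<bar>s\<^sup>2 + 1\<bar> powr (-1/2) \<le> 1"
      using powr_mono2'[of "-1/2" 1 "s\<^sup>2 + 1"] by simp
    ultimately have "?f s \<le> 1 * L \<kappa> powr (1 - q)"
      by (intro mult_mono) auto
    also have "\<dots> \<le> L (1 / \<kappa>) * L \<kappa> powr (1 - q)"
      using one_le_L by (intro mult_right_mono) auto
    finally show "?f s \<le> L (1 / \<kappa>) * L \<kappa> powr (1 - q)" .
  qed (simp_all add: less_imp_le[OF L_pos])
  moreover have "(\<integral>\<^sup>+s\<in>{1..}. ennreal (?f s) \<partial>lborel)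
      \<le> (\<integral>\<^sup>+s\<in>{1..}. ennreal (1 / s * L (\<kappa> * s ^ 4) powr (-q)) \<partial>lborel)"
  proof (intro set_nn_integral_mono_real)
    fix s :: real assume s: "s \<in> {1..}"
    have "(s\<^sup>2)\<^sup>2 \<le> (s\<^sup>2 + 1)\<^sup>2"
      by (intro power_mono) auto
    then have "\<kappa> * s ^ 4 \<le> \<kappa> * (s\<^sup>2 + 1)\<^sup>2"
      using assms by (simp flip: power_mult)
    moreover have "\<bar>s\<^sup>2 + 1\<bar> powr (-1/2) \<le> 1 / s"
      using s power2_powr_neg_half[of s] powr_mono2'[of "-1/2" "s\<^sup>2" "s\<^sup>2 + 1"] by simp
    ultimately show "?f s \<le> 1 / s * L (\<kappa> * s ^ 4) powr (-q)"
      using assms s by (intro mult_mono L_powr_antimono) auto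
  qed
  moreover have "\<dots> \<le> ennreal ((2 + 1 / (q - 1)) / 4 * L (1 / \<kappa>) * L \<kappa> powr (1 - q))"
    using nn_integral_inverse_L_tail_le[of \<kappa> 1 4 q] assms by simp
  ultimately have "(\<integral>\<^sup>+s\<in>{0..}. ennreal (?f s) \<partial>lborel)
      \<le> ennreal (L (1 / \<kappa>) * L \<kappa> powr (1 - q) * (1 - 0) + (2 + 1 / (q - 1)) / 4 * L (1 / \<kappa>) * L \<kappa> powr (1 - q))"
    using assms L_pos[of "1 / \<kappa>"] by (intro set_nn_integral_atLeast_split_le) auto
  also have "\<dots> = ennreal ((3 / 2 + 1 / (4 * (q - 1))) * L (1 / \<kappa>) * L \<kappa> powr (1 - q))"
    by (simp add: algebra_simps add_divide_distrib)
  finally show ?thesis .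
qed

lemma nn_integral_abs_L_quartic_minus_near_le:
  fixes \<kappa> q :: real
  assumes "0 < \<kappa>" "1 < q"
  shows "(\<integral>\<^sup>+s\<in>{0..2}. ennreal (\<bar>s\<^sup>2 - 1\<bar> powr (-1/2) * L (\<kappa> * (s\<^sup>2 - 1)\<^sup>2) powr (-q)) \<partial>lborel)
       \<le> ennreal ((4 * 2 powr q + 4 * (8 * (q - 1)) powr (q - 1)) * L \<kappa> powr (1 - q))"
proof -
  have "(\<integral>\<^sup>+s\<in>{0..2}. ennreal (\<bar>s\<^sup>2 - 1\<bar> powr (-1/2) * L (\<kappa> * (s\<^sup>2 - 1)\<^sup>2) powr (-q)) \<partial>lborel)
      \<le> (\<integral>\<^sup>+s\<in>{0..2}. ennreal (\<bar>s - 1\<bar> powr (-1/2) * L (\<kappa> * (s - 1)\<^sup>2) powr (-q)) \<partial>lborel)"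
  proof (intro set_nn_integral_mono_real)
    fix s :: real assume s: "s \<in> {0..2}"
    have abs_le: "\<bar>s - 1\<bar> \<le> \<bar>s\<^sup>2 - 1\<bar>"
      using s by (intro abs_diff_one_le_abs_square_diff_one) simp
    then have le: "\<kappa> * (s - 1)\<^sup>2 \<le> \<kappa> * (s\<^sup>2 - 1)\<^sup>2"
      using assms power_mono[OF abs_le, of 2] by simp
    show "\<bar>s\<^sup>2 - 1\<bar> powr (-1/2) * L (\<kappa> * (s\<^sup>2 - 1)\<^sup>2) powr (-q)
        \<le> \<bar>s - 1\<bar> powr (-1/2) * L (\<kappa> * (s - 1)\<^sup>2) powr (-q)"
    proof (cases "s = 1")
      case False
      then have "\<bar>s\<^sup>2 - 1\<bar> powr (-1/2) \<le> \<bar>s - 1\<bar> powr (-1/2)"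
        using abs_le by (intro powr_mono2') auto
      then show ?thesis
        using assms le by (intro mult_mono L_powr_antimono) auto
    qed simp
  qed
  also have "\<dots> \<le> ennreal ((4 * 2 powr q + 4 * (8 * (q - 1)) powr (q - 1)) * L \<kappa> powr (1 - q))"
    using nn_integral_abs_powr_L_le[of \<kappa> q 1] assms by simp
  finally show ?thesis .
qed

lemma nn_integral_abs_L_quartic_minus_tail_le:
  fixes \<kappa> q :: real
  assumes "0 < \<kappa>" "1 < q"
  shows "(\<integral>\<^sup>+s\<in>{2..}. ennreal (\<bar>s\<^sup>2 - 1\<bar> powr (-1/2) * L (\<kappa> * (s\<^sup>2 - 1)\<^sup>2) powr (-q)) \<partial>lborel)
       \<le> ennreal ((1 + 1 / (2 * (q - 1))) * L (1 / \<kappa>) * L \<kappa> powr (1 - q))"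
proof -
  have "(\<integral>\<^sup>+s\<in>{2..}. ennreal (\<bar>s\<^sup>2 - 1\<bar> powr (-1/2) * L (\<kappa> * (s\<^sup>2 - 1)\<^sup>2) powr (-q)) \<partial>lborel)
      \<le> (\<integral>\<^sup>+s\<in>{2..}. ennreal (2 * (1 / s * L (\<kappa> / 4 * s ^ 4) powr (-q))) \<partial>lborel)"
  proof (intro set_nn_integral_mono_real)
    fix s :: real assume s: "s \<in> {2..}"
    then have le: "\<kappa> / 4 * s ^ 4 \<le> \<kappa> * (s\<^sup>2 - 1)\<^sup>2"
      using quartic_le_square_minus_one_square[of s] assms by (simp add: mult_left_mono)
    have "4 \<le> s\<^sup>2"
      using s mult_mono[of 2 s 2 s] by (simp add: power2_eq_square)
    then have "(s / 2)\<^sup>2 \<le> \<bar>s\<^sup>2 - 1\<bar>"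
      by (simp add: power_divide)
    then have "\<bar>s\<^sup>2 - 1\<bar> powr (-1/2) \<le> 2 / s"
      using s power2_powr_neg_half[of "s / 2"] powr_mono2'[of "-1/2" "(s / 2)\<^sup>2" "\<bar>s\<^sup>2 - 1\<bar>"] by simp
    from mult_mono[OF this L_powr_antimono[OF le, of "-q"]] s assms
    show "\<bar>s\<^sup>2 - 1\<bar> powr (-1/2) * L (\<kappa> * (s\<^sup>2 - 1)\<^sup>2) powr (-q) \<le> 2 * (1 / s * L (\<kappa> / 4 * s ^ 4) powr (-q))"
      by simp
  qed
  also have "\<dots> \<le> ennreal (2 * ((2 + 1 / (q - 1)) / 4 * L (1 / (4 * \<kappa>)) * L (4 * \<kappa>) powr (1 - q)))"
    using nn_integral_inverse_L_tail_le[of "\<kappa> / 4" 2 4 q] assms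
    by (intro set_nn_integral_cmult_le) auto
  also have "\<dots> = ennreal ((1 + 1 / (2 * (q - 1))) * L (1 / (4 * \<kappa>)) * L (4 * \<kappa>) powr (1 - q))"
    using assms by (intro arg_cong[where f = ennreal]) (simp add: field_simps)
  also have "\<dots> \<le> ennreal ((1 + 1 / (2 * (q - 1))) * L (1 / \<kappa>) * L \<kappa> powr (1 - q))"
    using assms less_imp_le[OF L_pos]
    by (intro ennreal_leI mult_mono mult_left_mono L_mono L_powr_antimono) (auto simp: frac_le)
  finally show ?thesis .
qed

lemma nn_integral_abs_L_quartic_minus_le:
  fixes \<kappa> q :: real
  assumes "0 < \<kappa>" "1 < q"
  shows "(\<integral>\<^sup>+s\<in>{0..}. ennreal (\<bar>s\<^sup>2 - 1\<bar> powr (-1/2) * L (\<kappa> * (s\<^sup>2 - 1)\<^sup>2) powr (-q)) \<partial>lborel)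
       \<le> ennreal ((4 * 2 powr q + 4 * (8 * (q - 1)) powr (q - 1) + 1 + 1 / (2 * (q - 1)))
                   * L (1 / \<kappa>) * L \<kappa> powr (1 - q))"
proof -
  have "(4 * 2 powr q + 4 * (8 * (q - 1)) powr (q - 1)) * L \<kappa> powr (1 - q)
      \<le> (4 * 2 powr q + 4 * (8 * (q - 1)) powr (q - 1)) * L (1 / \<kappa>) * L \<kappa> powr (1 - q)"
    using mult_right_mono[OF one_le_L[of "1 / \<kappa>"], of "L \<kappa> powr (1 - q)"]
    by (simp add: mult.assoc mult_left_mono)
  then have "(\<integral>\<^sup>+s\<in>{0..}. ennreal (\<bar>s\<^sup>2 - 1\<bar> powr (-1/2) * L (\<kappa> * (s\<^sup>2 - 1)\<^sup>2) powr (-q)) \<partial>lborel)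
      \<le> ennreal ((4 * 2 powr q + 4 * (8 * (q - 1)) powr (q - 1)) * L (1 / \<kappa>) * L \<kappa> powr (1 - q)
                 + (1 + 1 / (2 * (q - 1))) * L (1 / \<kappa>) * L \<kappa> powr (1 - q))"
    using nn_integral_abs_L_quartic_minus_near_le[OF assms] nn_integral_abs_L_quartic_minus_tail_le[OF assms]
      assms less_imp_le[OF L_pos]
    by (intro set_nn_integral_atLeast_split_le) (auto intro: order_trans ennreal_leI)
  also have "\<dots> = ennreal ((4 * 2 powr q + 4 * (8 * (q - 1)) powr (q - 1) + 1 + 1 / (2 * (q - 1)))
                   * L (1 / \<kappa>) * L \<kappa> powr (1 - q))"
    by (simp add: algebra_simps)
  finally show ?thesis .
qed

section \<open>The quadratic integrals\<close>

lemma nn_integral_quadratic_head_le: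
  fixes \<kappa>1 \<kappa>2 r :: real
  assumes "0 < \<kappa>1" "0 < \<kappa>2" "0 \<le> r"
  shows "(\<integral>\<^sup>+s\<in>{0..sqrt (\<kappa>2 / \<kappa>1)}. ennreal ((\<kappa>1 * s\<^sup>2 + \<kappa>2) powr (-1/2) * L (\<kappa>1 * s\<^sup>2 + \<kappa>2) powr (-r)) \<partial>lborel)
       \<le> ennreal (\<kappa>1 powr (-1/2) * L \<kappa>2 powr (-r))"
proof -
  have "(\<integral>\<^sup>+s\<in>{0..sqrt (\<kappa>2 / \<kappa>1)}. ennreal ((\<kappa>1 * s\<^sup>2 + \<kappa>2) powr (-1/2) * L (\<kappa>1 * s\<^sup>2 + \<kappa>2) powr (-r)) \<partial>lborel)
      \<le> ennreal (\<kappa>2 powr (-1/2) * L \<kappa>2 powr (-r) * (sqrt (\<kappa>2 / \<kappa>1) - 0))"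
  proof (intro set_nn_integral_le_const)
    fix s :: real
    have "\<kappa>2 \<le> \<kappa>1 * s\<^sup>2 + \<kappa>2"
      using assms by simp
    then show "(\<kappa>1 * s\<^sup>2 + \<kappa>2) powr (-1/2) * L (\<kappa>1 * s\<^sup>2 + \<kappa>2) powr (-r) \<le> \<kappa>2 powr (-1/2) * L \<kappa>2 powr (-r)"
      using assms by (intro mult_mono powr_mono2' L_powr_antimono) auto
  qed (use assms in auto)
  also have "\<kappa>2 powr (-1/2) * L \<kappa>2 powr (-r) * (sqrt (\<kappa>2 / \<kappa>1) - 0) = \<kappa>1 powr (-1/2) * L \<kappa>2 powr (-r)"
    using assms by (simp add: powr_half_sqrt[symmetric] powr_divide powr_minus field_simps)
  finally show ?thesis .
qed

lemma nn_integral_M_L_quadratic_le: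
  fixes \<kappa>1 \<kappa>2 r :: real
  assumes "0 < \<kappa>1" "0 < \<kappa>2" "1 < r"
  shows "(\<integral>\<^sup>+s\<in>{0..}. ennreal (M (\<kappa>1 * s\<^sup>2 + \<kappa>2) powr (-1/2) * L (\<kappa>1 * s\<^sup>2 + \<kappa>2) powr (-r)) \<partial>lborel)
       \<le> ennreal ((2 + 1 / (2 * (r - 1))) * \<kappa>1 powr (-1/2) * L \<kappa>2 powr (1 - r))"
proof -
  let ?f = "\<lambda>s. M (\<kappa>1 * s\<^sup>2 + \<kappa>2) powr (-1/2) * L (\<kappa>1 * s\<^sup>2 + \<kappa>2) powr (-r)"
  define a where "a = sqrt (\<kappa>2 / \<kappa>1)"
  have a: "0 < a" "\<kappa>1 * a\<^sup>2 = \<kappa>2"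
    using assms by (simp_all add: a_def)
  have "(\<integral>\<^sup>+s\<in>{0..a}. ennreal (?f s) \<partial>lborel)
      \<le> (\<integral>\<^sup>+s\<in>{0..a}. ennreal ((\<kappa>1 * s\<^sup>2 + \<kappa>2) powr (-1/2) * L (\<kappa>1 * s\<^sup>2 + \<kappa>2) powr (-r)) \<partial>lborel)"
    using assms M_ge by (intro set_nn_integral_mono_real mult_right_mono powr_mono2') (auto intro!: add_nonneg_pos)
  also have "\<dots> \<le> ennreal (\<kappa>1 powr (-1/2) * L \<kappa>2 powr (1 - r))"
    using nn_integral_quadratic_head_le[of \<kappa>1 \<kappa>2 r] assms L_powr_mono[of "-r" "1 - r" \<kappa>2]
    by (auto simp: a_def intro: order_trans ennreal_leI mult_left_mono)
  finally have head: "(\<integral>\<^sup>+s\<in>{0..a}. ennreal (?f s) \<partial>lborel) \<le> ennreal (\<kappa>1 powr (-1/2) * L \<kappa>2 powr (1 - r))" .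
  have "(\<integral>\<^sup>+s\<in>{a..}. ennreal (?f s) \<partial>lborel)
      \<le> (\<integral>\<^sup>+s\<in>{a..}. ennreal (M (\<kappa>1 * s ^ 2) powr (-1/2) * L (\<kappa>1 * s ^ 2) powr (-r)) \<partial>lborel)"
    using assms by (intro set_nn_integral_mono_real M_L_powr_antimono) auto
  also have "\<dots> \<le> ennreal ((1 + 1 / (2 * (r - 1))) * \<kappa>1 powr (-1/2) * L \<kappa>2 powr (1 - r))"
    using nn_integral_M_L_tail_le[of \<kappa>1 a 2 r] assms a by simp
  finally have tail: "(\<integral>\<^sup>+s\<in>{a..}. ennreal (?f s) \<partial>lborel)
      \<le> ennreal ((1 + 1 / (2 * (r - 1))) * \<kappa>1 powr (-1/2) * L \<kappa>2 powr (1 - r))" .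
  have "(\<integral>\<^sup>+s\<in>{0..}. ennreal (?f s) \<partial>lborel)
      \<le> ennreal (\<kappa>1 powr (-1/2) * L \<kappa>2 powr (1 - r) + (1 + 1 / (2 * (r - 1))) * \<kappa>1 powr (-1/2) * L \<kappa>2 powr (1 - r))"
    using head tail assms by (intro set_nn_integral_atLeast_split_le) auto
  also have "\<dots> = ennreal ((2 + 1 / (2 * (r - 1))) * \<kappa>1 powr (-1/2) * L \<kappa>2 powr (1 - r))"
    by (simp add: algebra_simps)
  finally show ?thesis .
qed

lemma nn_integral_L_quadratic_le:
  fixes \<kappa>1 \<kappa>2 r :: real
  assumes "0 < \<kappa>1" "0 < \<kappa>2" "1 < r"
  shows "(\<integral>\<^sup>+s\<in>{0..}. ennreal ((\<kappa>1 * s\<^sup>2 + \<kappa>2) powr (-1/2) * L (\<kappa>1 * s\<^sup>2 + \<kappa>2) powr (-r)) \<partial>lborel)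
       \<le> ennreal ((2 + 1 / (2 * (r - 1))) * \<kappa>1 powr (-1/2) * L (1 / \<kappa>2) * L \<kappa>2 powr (1 - r))"
proof -
  let ?f = "\<lambda>s. (\<kappa>1 * s\<^sup>2 + \<kappa>2) powr (-1/2) * L (\<kappa>1 * s\<^sup>2 + \<kappa>2) powr (-r)"
  define a where "a = sqrt (\<kappa>2 / \<kappa>1)"
  have a: "0 < a" "\<kappa>1 * a\<^sup>2 = \<kappa>2"
    using assms by (simp_all add: a_def)
  define B where "B = \<kappa>1 powr (-1/2) * L (1 / \<kappa>2) * L \<kappa>2 powr (1 - r)"
  have "(\<integral>\<^sup>+s\<in>{0..a}. ennreal (?f s) \<partial>lborel) \<le> ennreal (\<kappa>1 powr (-1/2) * L \<kappa>2 powr (-r))"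
    using nn_integral_quadratic_head_le[of \<kappa>1 \<kappa>2 r] assms by (simp add: a_def)
  also have "\<dots> \<le> ennreal B"
  proof -
    have "L \<kappa>2 powr (-r) \<le> L (1 / \<kappa>2) * L \<kappa>2 powr (1 - r)"
      using L_powr_mono[of "-r" "1 - r" \<kappa>2] mult_right_mono[OF one_le_L[of "1 / \<kappa>2"], of "L \<kappa>2 powr (1 - r)"]
      by simp
    then show ?thesis
      unfolding B_def by (intro ennreal_leI) (simp add: mult.assoc mult_left_mono)
  qed
  finally have head: "(\<integral>\<^sup>+s\<in>{0..a}. ennreal (?f s) \<partial>lborel) \<le> ennreal B" .
  have "(\<integral>\<^sup>+s\<in>{a..}. ennreal (?f s) \<partial>lborel)
      \<le> (\<integral>\<^sup>+s\<in>{a..}. ennreal (\<kappa>1 powr (-1/2) * (1 / s * L (\<kappa>1 * s ^ 2) powr (-r))) \<partial>lborel)"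
  proof (intro set_nn_integral_mono_real)
    fix s :: real assume s: "s \<in> {a..}"
    then have "(\<kappa>1 * s\<^sup>2 + \<kappa>2) powr (-1/2) \<le> \<kappa>1 powr (-1/2) / s"
      using assms a powr_mult_power_inverse[of \<kappa>1 s 2] powr_mono2'[of "-1/2" "\<kappa>1 * s\<^sup>2" "\<kappa>1 * s\<^sup>2 + \<kappa>2"]
      by simp
    from mult_mono[OF this L_powr_antimono[of "\<kappa>1 * s\<^sup>2" "\<kappa>1 * s\<^sup>2 + \<kappa>2" "-r"]] assms s a
    show "?f s \<le> \<kappa>1 powr (-1/2) * (1 / s * L (\<kappa>1 * s ^ 2) powr (-r))"
      by simp
  qed
  also have "\<dots> \<le> ennreal (\<kappa>1 powr (-1/2) * ((2 + 1 / (r - 1)) / 2 * L (1 / \<kappa>2) * L \<kappa>2 powr (1 - r)))"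
    using nn_integral_inverse_L_tail_le[of \<kappa>1 a 2 r] assms a by (intro set_nn_integral_cmult_le) auto
  finally have tail: "(\<integral>\<^sup>+s\<in>{a..}. ennreal (?f s) \<partial>lborel)
      \<le> ennreal (\<kappa>1 powr (-1/2) * ((2 + 1 / (r - 1)) / 2 * L (1 / \<kappa>2) * L \<kappa>2 powr (1 - r)))" .
  have "(\<integral>\<^sup>+s\<in>{0..}. ennreal (?f s) \<partial>lborel)
      \<le> ennreal (B + \<kappa>1 powr (-1/2) * ((2 + 1 / (r - 1)) / 2 * L (1 / \<kappa>2) * L \<kappa>2 powr (1 - r)))"
    using head tail assms L_pos[of "1 / \<kappa>2"] by (intro set_nn_integral_atLeast_split_le) (auto simp: B_def)
  also have "B + \<kappa>1 powr (-1/2) * ((2 + 1 / (r - 1)) / 2 * L (1 / \<kappa>2) * L \<kappa>2 powr (1 - r))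
      = (2 + 1 / (2 * (r - 1))) * \<kappa>1 powr (-1/2) * L (1 / \<kappa>2) * L \<kappa>2 powr (1 - r)"
    unfolding B_def using assms by (simp add: field_simps)
  finally show ?thesis .
qed

lemma nn_integral_M_L_quartic_le:
  fixes \<kappa> q \<sigma> :: real
  assumes "0 < \<kappa>" "1 < q" "\<sigma> \<in> {1, -1}"
  shows "(\<integral>\<^sup>+s\<in>{0..}. ennreal (M (\<kappa> * (s\<^sup>2 + \<sigma>)\<^sup>2) powr (-1/4) * L (\<kappa> * (s\<^sup>2 + \<sigma>)\<^sup>2) powr (-q)) \<partial>lborel)
       \<le> ennreal ((4 * 2 powr q + 4 * (8 * (q - 1)) powr (q - 1) + 2 + 1 / (q - 1))
                   * \<kappa> powr (-1/4) * L \<kappa> powr (1 - q))"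
proof -
  have "0 \<le> 4 * 2 powr q + 4 * (8 * (q - 1)) powr (q - 1)" "1 / (4 * (q - 1)) \<le> 1 / (q - 1)"
    "1 / (2 * (q - 1)) \<le> 1 / (q - 1)"
    using assms by (simp_all add: frac_le)
  then have const_le: "2 + 1 / (4 * (q - 1)) \<le> 4 * 2 powr q + 4 * (8 * (q - 1)) powr (q - 1) + 2 + 1 / (q - 1)"
    "4 * 2 powr q + 4 * (8 * (q - 1)) powr (q - 1) + 2 + 1 / (2 * (q - 1))
       \<le> 4 * 2 powr q + 4 * (8 * (q - 1)) powr (q - 1) + 2 + 1 / (q - 1)"
    by linarith+
  from assms(3) consider "\<sigma> = 1" | "\<sigma> = -1"
    by blast
  then show ?thesis
  proof cases
    case 1
    show ?thesis
      unfolding 1 using const_le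
      by (intro order_trans[OF nn_integral_M_L_quartic_plus_le[OF assms(1,2)]] ennreal_leI mult_right_mono)
        auto
  next
    case 2
    show ?thesis
      unfolding 2 diff_conv_add_uminus[symmetric] using const_le
      by (intro order_trans[OF nn_integral_M_L_quartic_minus_le[OF assms(1,2)]] ennreal_leI mult_right_mono)
        auto
  qed
qed

lemma nn_integral_abs_L_quartic_le:
  fixes \<kappa> q \<sigma> :: real
  assumes "0 < \<kappa>" "1 < q" "\<sigma> \<in> {1, -1}"
  shows "(\<integral>\<^sup>+s\<in>{0..}. ennreal (\<bar>s\<^sup>2 + \<sigma>\<bar> powr (-1/2) * L (\<kappa> * (s\<^sup>2 + \<sigma>)\<^sup>2) powr (-q)) \<partial>lborel)
       \<le> ennreal ((4 * 2 powr q + 4 * (8 * (q - 1)) powr (q - 1) + 2 + 1 / (q - 1))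
                   * L (1 / \<kappa>) * L \<kappa> powr (1 - q))"
proof -
  have "0 \<le> 4 * 2 powr q + 4 * (8 * (q - 1)) powr (q - 1)" "1 / (4 * (q - 1)) \<le> 1 / (q - 1)"
    "1 / (2 * (q - 1)) \<le> 1 / (q - 1)"
    using assms by (simp_all add: frac_le)
  then have const_le: "3 / 2 + 1 / (4 * (q - 1)) \<le> 4 * 2 powr q + 4 * (8 * (q - 1)) powr (q - 1) + 2 + 1 / (q - 1)"
    "4 * 2 powr q + 4 * (8 * (q - 1)) powr (q - 1) + 1 + 1 / (2 * (q - 1))
       \<le> 4 * 2 powr q + 4 * (8 * (q - 1)) powr (q - 1) + 2 + 1 / (q - 1)"
    by linarith+
  from assms(3) consider "\<sigma> = 1" | "\<sigma> = -1"
    by blast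
  then show ?thesis
  proof cases
    case 1
    show ?thesis
      unfolding 1 using const_le
      by (intro order_trans[OF nn_integral_abs_L_quartic_plus_le[OF assms(1,2)]] ennreal_leI mult_right_mono)
        (auto simp: less_imp_le[OF L_pos])
  next
    case 2
    show ?thesis
      unfolding 2 diff_conv_add_uminus[symmetric] using const_le
      by (intro order_trans[OF nn_integral_abs_L_quartic_minus_le[OF assms(1,2)]] ennreal_leI mult_right_mono)
        (auto simp: less_imp_le[OF L_pos])
  qed
qed

lemma nn_integral_M_L_quartic_shift_le:
  fixes \<kappa>1 \<kappa>2 \<sigma> q p :: real
  assumes "0 < \<kappa>1" "0 < \<kappa>2" "\<sigma> \<in> {1, -1}" "1 < q" "0 \<le> p"
  shows "(\<integral>\<^sup>+s\<in>{0..}. ennreal (M (\<kappa>1 * (s\<^sup>2 + \<sigma>)\<^sup>2 + \<kappa>2) powr (-1/4)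
                            * L (\<kappa>1 * (s\<^sup>2 + \<sigma>)\<^sup>2 + \<kappa>2) powr (-(q + p))) \<partial>lborel)
       \<le> ennreal ((4 * 2 powr q + 4 * (8 * (q - 1)) powr (q - 1) + 2 + 1 / (q - 1))
                   * \<kappa>1 powr (-1/4) * L \<kappa>1 powr (1 - q) * L \<kappa>2 powr (-p))"
proof -
  have "(\<integral>\<^sup>+s\<in>{0..}. ennreal (M (\<kappa>1 * (s\<^sup>2 + \<sigma>)\<^sup>2 + \<kappa>2) powr (-1/4)
                            * L (\<kappa>1 * (s\<^sup>2 + \<sigma>)\<^sup>2 + \<kappa>2) powr (-(q + p))) \<partial>lborel)
      \<le> (\<integral>\<^sup>+s\<in>{0..}. ennreal (L \<kappa>2 powr (-p)
            * (M (\<kappa>1 * (s\<^sup>2 + \<sigma>)\<^sup>2) powr (-1/4) * L (\<kappa>1 * (s\<^sup>2 + \<sigma>)\<^sup>2) powr (-q))) \<partial>lborel)"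
  proof (intro set_nn_integral_mono_real)
    fix s :: real
    define y where "y = \<kappa>1 * (s\<^sup>2 + \<sigma>)\<^sup>2"
    have "0 \<le> y"
      using assms by (simp add: y_def)
    have split: "L (y + \<kappa>2) powr (-(q + p)) = L (y + \<kappa>2) powr (-q) * L (y + \<kappa>2) powr (-p)"
      by (simp add: powr_add[symmetric])
    from \<open>0 \<le> y\<close> have "M (y + \<kappa>2) powr (-1/4) * L (y + \<kappa>2) powr (-q) * L (y + \<kappa>2) powr (-p)
        \<le> M y powr (-1/4) * L y powr (-q) * L \<kappa>2 powr (-p)"
      using assms by (intro mult_mono M_L_powr_antimono L_powr_antimono) auto
    then show "M (y + \<kappa>2) powr (-1/4) * L (y + \<kappa>2) powr (-(q + p))
        \<le> L \<kappa>2 powr (-p) * (M y powr (-1/4) * L y powr (-q))"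
      unfolding split by (simp add: mult_ac)
  qed
  also have "\<dots> \<le> ennreal (L \<kappa>2 powr (-p) * ((4 * 2 powr q + 4 * (8 * (q - 1)) powr (q - 1) + 2 + 1 / (q - 1))
                   * \<kappa>1 powr (-1/4) * L \<kappa>1 powr (1 - q)))"
    using nn_integral_M_L_quartic_le[OF assms(1,4,3)] by (intro set_nn_integral_cmult_le) auto
  finally show ?thesis
    by (simp add: mult_ac)
qed

theorem lemma2p2:
  fixes r r1 r2 :: real
  assumes "r > 2" and "r1 \<ge> 2" and "r2 \<ge> 0" and "r = r1 + r2"
  shows "\<exists>c>0. \<forall>\<kappa>1 \<kappa>2 \<sigma>::real. \<kappa>1 > 0 \<longrightarrow> \<kappa>2 > 0 \<longrightarrow> \<sigma> \<in> {1, -1} \<longrightarrow>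
     (\<integral>\<^sup>+ s\<in>{0..}. ennreal (M (\<kappa>1 * (s\<^sup>2 + \<sigma>)\<^sup>2 + \<kappa>2) powr (-1/4)
                              * L (\<kappa>1 * (s\<^sup>2 + \<sigma>)\<^sup>2 + \<kappa>2) powr (-r)) \<partial>lborel)
        \<le> ennreal (c * \<kappa>1 powr (-1/4) * L \<kappa>1 powr (-r1 + 1) * L \<kappa>2 powr (-r2))
   \<and> (\<integral>\<^sup>+ s\<in>{0..}. ennreal (\<bar>s\<^sup>2 + \<sigma>\<bar> powr (-1/2)
                              * L (\<kappa>1 * (s\<^sup>2 + \<sigma>)\<^sup>2) powr (-r)) \<partial>lborel)
        \<le> ennreal (c * L (1 / \<kappa>1) * L \<kappa>1 powr (-r + 1))
   \<and> (\<integral>\<^sup>+ s\<in>{0..}. ennreal (M (\<kappa>1 * s\<^sup>2 + \<kappa>2) powr (-1/2)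
                              * L (\<kappa>1 * s\<^sup>2 + \<kappa>2) powr (-r)) \<partial>lborel)
        \<le> ennreal (c * \<kappa>1 powr (-1/2) * L \<kappa>2 powr (-r + 2))
   \<and> (\<integral>\<^sup>+ s\<in>{0..}. ennreal ((\<kappa>1 * s\<^sup>2 + \<kappa>2) powr (-1/2)
                              * L (\<kappa>1 * s\<^sup>2 + \<kappa>2) powr (-r)) \<partial>lborel)
        \<le> ennreal (c * \<kappa>1 powr (-1/2) * L (1 / \<kappa>2) * L \<kappa>2 powr (-r + 2))"
proof -
  define K where "K q = 4 * 2 powr q + 4 * (8 * (q - 1)) powr (q - 1) + 2 + 1 / (q - 1)" for q :: real
  have r: "1 < r1" "1 < r"
    using assms by auto
  define c where "c = K r1 + K r + 2 + 1 / (2 * (r - 1))"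
  have K: "0 \<le> K r1" "0 \<le> K r" "0 < 1 / (2 * (r - 1))"
    using r by (simp_all add: K_def)
  then have c: "K r1 \<le> c" "K r \<le> c" "2 + 1 / (2 * (r - 1)) \<le> c" "0 < c"
    unfolding c_def by linarith+
  show ?thesis
    unfolding mult.assoc
  proof (intro exI[of _ c] conjI allI impI, goal_cases)
    case 1
    show ?case
      using c by simp
  next
    case (2 \<kappa>1 \<kappa>2 \<sigma>)
    show ?case
      using nn_integral_M_L_quartic_shift_le[OF 2 r(1) assms(3), folded assms(4) K_def, unfolded mult.assoc] c
      by (elim ennreal_le_weaken) (auto simp: K r)
  next
    case (3 \<kappa>1 \<kappa>2 \<sigma>)
    show ?case
      using nn_integral_abs_L_quartic_le[OF 3(1) r(2) 3(3), folded K_def, unfolded mult.assoc] c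
      by (elim ennreal_le_weaken) (auto simp: K less_imp_le[OF L_pos])
  next
    case (4 \<kappa>1 \<kappa>2 \<sigma>)
    show ?case
      using nn_integral_M_L_quadratic_le[OF 4(1,2) r(2), unfolded mult.assoc] c K
      by (elim ennreal_le_weaken) (auto intro!: mult_left_mono L_powr_mono)
  next
    case (5 \<kappa>1 \<kappa>2 \<sigma>)
    show ?case
      using nn_integral_L_quadratic_le[OF 5(1,2) r(2), unfolded mult.assoc] c K
      by (elim ennreal_le_weaken) (auto simp: less_imp_le[OF L_pos] intro!: mult_left_mono L_powr_mono)
  qed
qed

end
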